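(* Let $\mathbf q=(q_1,\dots,q_R)$ be route flows, $\mathbf t=(t_1,\dots,t_R)$ route travel times, and let $\mu$ be an assignment plan inducing an offer profile $T^{CAV}$ subject to $(\mathbf q,\mathbf t)$. Then there exist measurable weights $\alpha^{r_1r_2}:I\to[0,1]$, $(r_1,r_2)\in\{1,\dots,R\}^2$, with $\sum_{r_1,r_2}\alpha^{r_1r_2}(i)=1$, and measurable vectors $\mu^R(i,r_1,r_2,\cdot)\in\Delta^{R-1}$, each having at most two positive coordinates, such that for a.e. $i$: $\sum_rt_r\mu^R(i,r_1,r_2,r)=T^{CAV}_i$ whenever $\alpha^{r_1r_2}(i)>0$, and $\sum_{r_1,r_2}\alpha^{r_1r_2}(i)\mu^R(i,r_1,r_2,r)=\mu(i,r)$ for every $r$. Equivalently, on the augmented driver space $\tilde I=I\times\{1,\dots,R\}^2$ with measure $\tilde{di}(A)=\int_I\sum_{r_1,r_2}\alpha^{r_1r_2}(i)\mathbf 1_{(i,r_1,r_2)\in A}\,di$ (which splits each driver into finitely many parts), $\mu^R$ is an assignment plan whose induced distribution on $\Delta^{R-1}$ is supported on vectors with at most two nonzero coordinates, which induces the same travel time distribution as $\mu$, and from which $\mu$ is recovered by recombining the parts of each driver. (Such a plan is in general not unique.)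
   Context: Drivers form a measure space $(I,di)$ of total mass $q=\sum_rq_r$. $\Delta^{R-1}=\{(x_1,\dots,x_R):x_r\ge0,\sum_rx_r=1\}$. An offer profile subject to $(\mathbf q,\mathbf t)$ is a measurable $T^{CAV}:I\to[\min_rt_r,\max_rt_r]$ with $\frac1{|I|}\int_IT^{CAV}_i\,di=\frac1q\sum_rq_rt_r$. An assignment plan inducing $T^{CAV}$ is a measurable $\mu:I\times\{1,\dots,R\}\to[0,1]$ with $\int_I\mu(i,r)\,di=q_r$ for every $r$, $\sum_r\mu(i,r)=1$ and $\sum_rt_r\mu(i,r)=T^{CAV}_i$ for a.e. $i$. The travel time distribution induced by a plan is the push-forward of the driver measure under $i\mapsto\sum_rt_r\mu(i,r)$. *)

theory Defs
  imports "HOL-Analysis.Analysis"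
begin

text \<open>Routes are indexed by 1..R. Vectors over routes are functions nat => real,
  only the values on 1..R matter.\<close>

definition route_simplex :: "nat \<Rightarrow> (nat \<Rightarrow> real) set" where
  "route_simplex R = {x. (\<forall>r\<in>{1..R}. 0 \<le> x r) \<and> (\<Sum>r=1..R. x r) = 1}"

definition offer_profile ::
  "'a measure \<Rightarrow> nat \<Rightarrow> (nat \<Rightarrow> real) \<Rightarrow> (nat \<Rightarrow> real) \<Rightarrow> ('a \<Rightarrow> real) \<Rightarrow> bool" where
  "offer_profile M R q t T \<longleftrightarrow>
     T \<in> borel_measurable M \<and>
     (\<forall>i\<in>space M. T i \<in> {Min (t ` {1..R}) .. Max (t ` {1..R})}) \<and>
     (1 / measure M (space M)) * (\<integral>i. T i \<partial>M)
        = (1 / (\<Sum>r=1..R. q r)) * (\<Sum>r=1..R. q r * t r)"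

definition assignment_plan ::
  "'a measure \<Rightarrow> nat \<Rightarrow> (nat \<Rightarrow> real) \<Rightarrow> (nat \<Rightarrow> real) \<Rightarrow> ('a \<Rightarrow> real)
     \<Rightarrow> ('a \<Rightarrow> nat \<Rightarrow> real) \<Rightarrow> bool" where
  "assignment_plan M R q t T \<mu> \<longleftrightarrow>
     (\<forall>r\<in>{1..R}. (\<lambda>i. \<mu> i r) \<in> borel_measurable M \<and>
                  (\<forall>i\<in>space M. \<mu> i r \<in> {0..1}) \<and>
                  (\<integral>i. \<mu> i r \<partial>M) = q r) \<and>
     (AE i in M. (\<Sum>r=1..R. \<mu> i r) = 1 \<and> (\<Sum>r=1..R. t r * \<mu> i r) = T i)"

end

theory Submission
  imports Defs
begin

(* A driver's route distribution x, with mean travel time tau, is a mixture of two-route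
   distributions with the same mean.  Every pair of routes with t r1 < tau < t r2 contributes the
   unique distribution on {r1, r2} with mean tau, with weight x r1 * x r2 * (t r2 - t r1) / E, and
   every route with t r = tau contributes its point mass with weight x r.  Here E is the expected
   excess sum x r * (t r - tau)^+ of the travel time over tau, which equals the expected shortfall
   sum x r * (tau - t r)^+ because tau is the mean; this balance is exactly what makes the mixture
   recombine to x.  All weights and plans are explicit formulas in x and tau, hence measurable in
   the driver. *)

definition excess :: "'r set \<Rightarrow> ('r \<Rightarrow> real) \<Rightarrow> ('r \<Rightarrow> real) \<Rightarrow> real \<Rightarrow> real" where
  "excess S x t \<tau> = (\<Sum>r\<in>S. x r * max 0 (t r - \<tau>))"

definition pair_weight ::
  "'r set \<Rightarrow> ('r \<Rightarrow> real) \<Rightarrow> ('r \<Rightarrow> real) \<Rightarrow> real \<Rightarrow> 'r \<Rightarrow> 'r \<Rightarrow> real" where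
  "pair_weight S x t \<tau> r1 r2 =
     (if t r1 < \<tau> \<and> \<tau> < t r2 then x r1 * x r2 * (t r2 - t r1) / excess S x t \<tau>
      else if r1 = r2 \<and> t r1 = \<tau> then x r1 else 0)"

definition pair_plan :: "('r \<Rightarrow> real) \<Rightarrow> real \<Rightarrow> 'r \<Rightarrow> 'r \<Rightarrow> 'r \<Rightarrow> real" where
  "pair_plan t \<tau> r1 r2 r =
     (if t r1 < \<tau> \<and> \<tau> < t r2 then
        (if r = r1 then (t r2 - \<tau>) / (t r2 - t r1)
         else if r = r2 then (\<tau> - t r1) / (t r2 - t r1) else 0)
      else if r = r1 then 1 else 0)"

lemma pair_plan_nonneg: "0 \<le> pair_plan t \<tau> r1 r2 r"
  by (auto simp: pair_plan_def)

lemma card_pair_plan_support_le_2: "card {r\<in>S. 0 < pair_plan t \<tau> r1 r2 r} \<le> 2"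
proof -
  have "card {r\<in>S. 0 < pair_plan t \<tau> r1 r2 r} \<le> card {r1, r2}"
    by (rule card_mono) (auto simp: pair_plan_def split: if_splits)
  also have "\<dots> \<le> 2"
    by (simp add: card_insert_if)
  finally show ?thesis .
qed

lemma pair_plan_between:
  assumes "t r1 < \<tau>" "\<tau> < t r2"
  shows "pair_plan t \<tau> r1 r2 r =
    (if r = r1 then (t r2 - \<tau>) / (t r2 - t r1) else 0) +
    (if r = r2 then (\<tau> - t r1) / (t r2 - t r1) else 0)"
  using assms by (auto simp: pair_plan_def)

lemma pair_plan_not_between:
  assumes "\<not> (t r1 < \<tau> \<and> \<tau> < t r2)"
  shows "pair_plan t \<tau> r1 r2 r = (if r = r1 then 1 else 0)"
  using assms by (auto simp: pair_plan_def)

lemma sum_pair_plan: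
  assumes "finite S" "r1 \<in> S" "r2 \<in> S"
  shows "(\<Sum>r\<in>S. pair_plan t \<tau> r1 r2 r) = 1"
proof (cases "t r1 < \<tau> \<and> \<tau> < t r2")
  case True
  with assms show ?thesis
    by (simp add: pair_plan_between sum.distrib add_divide_distrib[symmetric])
next
  case False
  with assms show ?thesis
    by (simp add: pair_plan_not_between)
qed

lemma pair_plan_mean:
  assumes "finite S" "r1 \<in> S" "r2 \<in> S" "t r1 < \<tau> \<and> \<tau> < t r2 \<or> t r1 = \<tau>"
  shows "(\<Sum>r\<in>S. t r * pair_plan t \<tau> r1 r2 r) = \<tau>"
proof (cases "t r1 < \<tau> \<and> \<tau> < t r2")
  case True
  have "t r1 * (t r2 - \<tau>) + t r2 * (\<tau> - t r1) = \<tau> * (t r2 - t r1)"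
    by algebra
  with True assms show ?thesis
    by (simp add: pair_plan_between sum.distrib distrib_left mult_delta_right
                  add_divide_distrib[symmetric])
next
  case False
  with assms show ?thesis
    by (simp add: pair_plan_not_between mult_delta_right)
qed

lemma pair_weight_nonneg:
  assumes "\<forall>r\<in>S. 0 \<le> x r" "r1 \<in> S" "r2 \<in> S"
  shows "0 \<le> pair_weight S x t \<tau> r1 r2"
proof -
  have "0 \<le> excess S x t \<tau>"
    unfolding excess_def using assms(1) by (intro sum_nonneg) auto
  with assms show ?thesis
    by (auto simp: pair_weight_def)
qed

lemma pair_plan_mean_if_pair_weight_pos:
  assumes "finite S" "r1 \<in> S" "r2 \<in> S" "0 < pair_weight S x t \<tau> r1 r2"
  shows "(\<Sum>r\<in>S. t r * pair_plan t \<tau> r1 r2 r) = \<tau>"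
  using assms by (intro pair_plan_mean) (auto simp: pair_weight_def split: if_splits)

lemma excess_eq_shortfall:
  assumes "(\<Sum>r\<in>S. x r * (t r - \<tau>)) = 0"
  shows "excess S x t \<tau> = (\<Sum>r\<in>S. x r * max 0 (\<tau> - t r))"
proof -
  have "excess S x t \<tau> - (\<Sum>r\<in>S. x r * max 0 (\<tau> - t r)) = (\<Sum>r\<in>S. x r * (t r - \<tau>))"
    unfolding excess_def sum_subtractf[symmetric] by (intro sum.cong) (auto simp: max_def algebra_simps)
  with assms show ?thesis
    by simp
qed

lemma pair_weight_times_pair_plan:
  "pair_weight S x t \<tau> r1 r2 * pair_plan t \<tau> r1 r2 r =
     (if r = r1 \<and> t r < \<tau> then x r * (x r2 * max 0 (t r2 - \<tau>)) / excess S x t \<tau> else 0) +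
     (if r = r2 \<and> \<tau> < t r then x r * (x r1 * max 0 (\<tau> - t r1)) / excess S x t \<tau> else 0) +
     (if r1 = r \<and> r2 = r \<and> t r = \<tau> then x r else 0)"
  by (cases "excess S x t \<tau> = 0") (auto simp: pair_weight_def pair_plan_def field_simps)

lemma sum_pair_weight_times_pair_plan:
  assumes "finite S" "\<forall>r\<in>S. 0 \<le> x r" "(\<Sum>r\<in>S. x r * (t r - \<tau>)) = 0" "r \<in> S"
  shows "(\<Sum>r1\<in>S. \<Sum>r2\<in>S. pair_weight S x t \<tau> r1 r2 * pair_plan t \<tau> r1 r2 r) = x r"
proof -
  define D where "D = excess S x t \<tau>"
  have shortfall: "(\<Sum>r\<in>S. x r * max 0 (\<tau> - t r)) = D"
    using excess_eq_shortfall[OF assms(3)] by (simp add: D_def)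
  have below: "(\<Sum>r1\<in>S. \<Sum>r2\<in>S.
      if r = r1 \<and> t r < \<tau> then x r * (x r2 * max 0 (t r2 - \<tau>)) / D else 0) =
      (if t r < \<tau> then x r * D / D else 0)"
    using assms(1,4)
    by (subst sum.swap) (simp add: D_def excess_def sum_distrib_left sum_divide_distrib if_distrib)
  have above: "(\<Sum>r1\<in>S. \<Sum>r2\<in>S.
      if r = r2 \<and> \<tau> < t r then x r * (x r1 * max 0 (\<tau> - t r1)) / D else 0) =
      (if \<tau> < t r then x r * D / D else 0)"
    using assms(1,4) by (simp add: shortfall[symmetric] sum_distrib_left sum_divide_distrib if_distrib)
  have diagonal: "(\<Sum>r1\<in>S. \<Sum>r2\<in>S. if r1 = r \<and> r2 = r \<and> t r = \<tau> then x r else 0) =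
      (if t r = \<tau> then x r else 0)"
    using assms(1,4) by (subst sum.swap) (simp flip: if_if_eq_conj)
  have "x r = 0" if "D = 0" "t r \<noteq> \<tau>"
  proof -
    have "(\<Sum>r\<in>S. x r * max 0 (t r - \<tau>)) = 0" "(\<Sum>r\<in>S. x r * max 0 (\<tau> - t r)) = 0"
      using that(1) shortfall by (simp_all add: D_def excess_def)
    then have "x r * max 0 (t r - \<tau>) = 0" "x r * max 0 (\<tau> - t r) = 0"
      using assms(1,2,4) by (simp_all add: sum_nonneg_eq_0_iff)
    with that(2) show ?thesis
      by (auto simp: max_def split: if_splits)
  qed
  then show ?thesis
    by (auto simp: pair_weight_times_pair_plan[of S x t \<tau>, folded D_def] sum.distrib below above diagonal)
qed

lemma sum_deviation_eq_0:
  fixes x t :: "'r \<Rightarrow> real"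
  assumes "(\<Sum>r\<in>S. x r) = 1" "(\<Sum>r\<in>S. t r * x r) = \<tau>"
  shows "(\<Sum>r\<in>S. x r * (t r - \<tau>)) = 0"
proof -
  have "(\<Sum>r\<in>S. x r * (t r - \<tau>)) = (\<Sum>r\<in>S. t r * x r) - \<tau> * (\<Sum>r\<in>S. x r)"
    by (simp add: right_diff_distrib sum_subtractf sum_distrib_left mult.commute)
  with assms show ?thesis
    by simp
qed

lemma sum_pair_weight:
  assumes "finite S" "\<forall>r\<in>S. 0 \<le> x r" "(\<Sum>r\<in>S. x r) = 1" "(\<Sum>r\<in>S. t r * x r) = \<tau>"
  shows "(\<Sum>r1\<in>S. \<Sum>r2\<in>S. pair_weight S x t \<tau> r1 r2) = 1"
proof -
  have "(\<Sum>r1\<in>S. \<Sum>r2\<in>S. pair_weight S x t \<tau> r1 r2) =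
      (\<Sum>r1\<in>S. \<Sum>r2\<in>S. \<Sum>r\<in>S. pair_weight S x t \<tau> r1 r2 * pair_plan t \<tau> r1 r2 r)"
    using assms(1) by (simp add: sum_pair_plan flip: sum_distrib_left)
  also have "\<dots> = (\<Sum>r1\<in>S. \<Sum>r\<in>S. \<Sum>r2\<in>S. pair_weight S x t \<tau> r1 r2 * pair_plan t \<tau> r1 r2 r)"
    by (intro sum.cong refl sum.swap)
  also have "\<dots> = (\<Sum>r\<in>S. \<Sum>r1\<in>S. \<Sum>r2\<in>S. pair_weight S x t \<tau> r1 r2 * pair_plan t \<tau> r1 r2 r)"
    by (rule sum.swap)
  also have "\<dots> = (\<Sum>r\<in>S. x r)"
    using assms by (simp add: sum_pair_weight_times_pair_plan sum_deviation_eq_0)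
  finally show ?thesis
    using assms(3) by simp
qed

lemma pair_weight_le_1:
  assumes "finite S" "\<forall>r\<in>S. 0 \<le> x r" "(\<Sum>r\<in>S. x r) = 1" "(\<Sum>r\<in>S. t r * x r) = \<tau>"
    and "r1 \<in> S" "r2 \<in> S"
  shows "pair_weight S x t \<tau> r1 r2 \<le> 1"
proof -
  have "pair_weight S x t \<tau> r1 r2 \<le> (\<Sum>r2'\<in>S. pair_weight S x t \<tau> r1 r2')"
    using assms by (intro member_le_sum pair_weight_nonneg) auto
  also have "\<dots> \<le> (\<Sum>r1'\<in>S. \<Sum>r2'\<in>S. pair_weight S x t \<tau> r1' r2')"
    using assms by (intro member_le_sum sum_nonneg pair_weight_nonneg) auto
  also have "\<dots> = 1"
    using assms(1-4) by (rule sum_pair_weight)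
  finally show ?thesis .
qed

lemma borel_measurable_pair_plan [measurable]:
  assumes [measurable]: "\<tau> \<in> borel_measurable M"
  shows "(\<lambda>i. pair_plan t (\<tau> i) r1 r2 r) \<in> borel_measurable M"
  unfolding pair_plan_def by measurable

lemma borel_measurable_pair_weight:
  assumes "\<And>r. r \<in> S \<Longrightarrow> (\<lambda>i. x i r) \<in> borel_measurable M"
    and [measurable]: "\<tau> \<in> borel_measurable M"
    and "r1 \<in> S" "r2 \<in> S"
  shows "(\<lambda>i. pair_weight S (x i) t (\<tau> i) r1 r2) \<in> borel_measurable M"
proof -
  have [measurable]: "(\<lambda>i. excess S (x i) t (\<tau> i)) \<in> borel_measurable M"
    unfolding excess_def
  proof (rule borel_measurable_sum)
    fix r assume "r \<in> S"
    then have [measurable]: "(\<lambda>i. x i r) \<in> borel_measurable M"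
      by (rule assms(1))
    show "(\<lambda>i. x i r * max 0 (t r - \<tau> i)) \<in> borel_measurable M"
      by measurable
  qed
  have [measurable]: "(\<lambda>i. x i r1) \<in> borel_measurable M" "(\<lambda>i. x i r2) \<in> borel_measurable M"
    using assms(1,3,4) by auto
  show ?thesis
    unfolding pair_weight_def by measurable
qed

lemma assignment_plan_simplex_representative:
  assumes "R \<ge> 1" "assignment_plan M R q t T \<mu>"
  obtains x where "\<And>r. r \<in> {1..R} \<Longrightarrow> (\<lambda>i. x i r) \<in> borel_measurable M"
    and "\<And>i. i \<in> space M \<Longrightarrow> x i \<in> route_simplex R"
    and "AE i in M. x i = \<mu> i"
proof -
  let ?S = "{1..R}"
  from assms(2) have \<mu>_meas: "\<And>r. r \<in> ?S \<Longrightarrow> (\<lambda>i. \<mu> i r) \<in> borel_measurable M"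
    and \<mu>_nonneg: "\<And>i r. i \<in> space M \<Longrightarrow> r \<in> ?S \<Longrightarrow> 0 \<le> \<mu> i r"
    and \<mu>_AE: "AE i in M. (\<Sum>r\<in>?S. \<mu> i r) = 1"
    by (auto simp: assignment_plan_def)
  define x where "x i r = (if (\<Sum>r\<in>?S. \<mu> i r) = 1 then \<mu> i r else if r = 1 then 1 else 0)" for i r
  have [measurable]: "(\<lambda>i. \<Sum>r\<in>?S. \<mu> i r) \<in> borel_measurable M"
    using \<mu>_meas by (rule borel_measurable_sum)
  show thesis
  proof (rule that)
  show "(\<lambda>i. x i r) \<in> borel_measurable M" if "r \<in> ?S" for r
    using \<mu>_meas[OF that] unfolding x_def by measurable
  show "x i \<in> route_simplex R" if "i \<in> space M" for i
    using assms(1) \<mu>_nonneg[OF that]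
    by (cases "(\<Sum>r\<in>?S. \<mu> i r) = 1") (auto simp: x_def route_simplex_def)
  show "AE i in M. x i = \<mu> i"
    using \<mu>_AE by eventually_elim (auto simp: x_def)
  qed
qed

theorem proposition7:
  fixes M :: "'a measure" and R :: nat
    and q t :: "nat \<Rightarrow> real" and T :: "'a \<Rightarrow> real" and \<mu> :: "'a \<Rightarrow> nat \<Rightarrow> real"
  assumes "R \<ge> 1"
    and "\<forall>r\<in>{1..R}. 0 \<le> q r"
    and "emeasure M (space M) = ennreal (\<Sum>r=1..R. q r)"
    and "offer_profile M R q t T"
    and "assignment_plan M R q t T \<mu>"
  shows "\<exists>(\<alpha> :: 'a \<Rightarrow> nat \<Rightarrow> nat \<Rightarrow> real) (\<mu>R :: 'a \<Rightarrow> nat \<Rightarrow> nat \<Rightarrow> nat \<Rightarrow> real).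
     (\<forall>r1\<in>{1..R}. \<forall>r2\<in>{1..R}.
        (\<lambda>i. \<alpha> i r1 r2) \<in> borel_measurable M \<and>
        (\<forall>i\<in>space M. \<alpha> i r1 r2 \<in> {0..1}) \<and>
        (\<forall>r\<in>{1..R}. (\<lambda>i. \<mu>R i r1 r2 r) \<in> borel_measurable M) \<and>
        (\<forall>i\<in>space M. \<mu>R i r1 r2 \<in> route_simplex R \<and>
                      card {r\<in>{1..R}. \<mu>R i r1 r2 r > 0} \<le> 2)) \<and>
     (\<forall>i\<in>space M. (\<Sum>r1=1..R. \<Sum>r2=1..R. \<alpha> i r1 r2) = 1) \<and>
     (AE i in M.
        (\<forall>r1\<in>{1..R}. \<forall>r2\<in>{1..R}. \<alpha> i r1 r2 > 0 \<longrightarrow>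
             (\<Sum>r=1..R. t r * \<mu>R i r1 r2 r) = T i) \<and>
        (\<forall>r\<in>{1..R}. (\<Sum>r1=1..R. \<Sum>r2=1..R. \<alpha> i r1 r2 * \<mu>R i r1 r2 r) = \<mu> i r))"
proof -
  let ?S = "{1..R}"
  obtain x where x_meas: "\<And>r. r \<in> ?S \<Longrightarrow> (\<lambda>i. x i r) \<in> borel_measurable M"
    and x_simplex: "\<And>i. i \<in> space M \<Longrightarrow> x i \<in> route_simplex R"
    and x_AE: "AE i in M. x i = \<mu> i"
    using assignment_plan_simplex_representative[OF assms(1,5)] by blast
  have \<mu>_mean: "AE i in M. (\<Sum>r\<in>?S. t r * \<mu> i r) = T i"
    using assms(5) by (auto simp: assignment_plan_def elim: eventually_mono)
  define \<tau> where "\<tau> i = (\<Sum>r\<in>?S. t r * x i r)" for i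
  define \<alpha> where "\<alpha> i = pair_weight ?S (x i) t (\<tau> i)" for i
  define \<mu>R where "\<mu>R i = pair_plan t (\<tau> i)" for i
  have \<tau>_meas: "\<tau> \<in> borel_measurable M"
    unfolding \<tau>_def using x_meas by (auto intro!: borel_measurable_sum)
  have x_dist: "(\<forall>r\<in>?S. 0 \<le> x i r) \<and> (\<Sum>r\<in>?S. x i r) = 1 \<and> (\<Sum>r\<in>?S. t r * x i r) = \<tau> i"
    if "i \<in> space M" for i
    using x_simplex[OF that] by (simp add: route_simplex_def \<tau>_def)
  have \<mu>R_card: "card {r\<in>?S. \<mu>R i r1 r2 r > 0} \<le> 2" for i r1 r2
    unfolding \<mu>R_def by (rule card_pair_plan_support_le_2)
  have "\<forall>r1\<in>?S. \<forall>r2\<in>?S. (\<lambda>i. \<alpha> i r1 r2) \<in> borel_measurable M \<and>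
      (\<forall>i\<in>space M. \<alpha> i r1 r2 \<in> {0..1}) \<and>
      (\<forall>r\<in>?S. (\<lambda>i. \<mu>R i r1 r2 r) \<in> borel_measurable M) \<and>
      (\<forall>i\<in>space M. \<mu>R i r1 r2 \<in> route_simplex R \<and> card {r\<in>?S. \<mu>R i r1 r2 r > 0} \<le> 2)"
    using \<mu>R_card x_dist \<tau>_meas
    by (auto simp: \<alpha>_def \<mu>R_def route_simplex_def pair_weight_nonneg pair_weight_le_1
        pair_plan_nonneg sum_pair_plan intro: borel_measurable_pair_weight[OF x_meas \<tau>_meas])
  moreover have "\<forall>i\<in>space M. (\<Sum>r1\<in>?S. \<Sum>r2\<in>?S. \<alpha> i r1 r2) = 1"
    using x_dist by (simp add: \<alpha>_def sum_pair_weight)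
  moreover have "AE i in M.
      (\<forall>r1\<in>?S. \<forall>r2\<in>?S. \<alpha> i r1 r2 > 0 \<longrightarrow> (\<Sum>r\<in>?S. t r * \<mu>R i r1 r2 r) = T i) \<and>
      (\<forall>r\<in>?S. (\<Sum>r1\<in>?S. \<Sum>r2\<in>?S. \<alpha> i r1 r2 * \<mu>R i r1 r2 r) = \<mu> i r)"
    using AE_space x_AE \<mu>_mean
  proof eventually_elim
    case (elim i)
    with x_dist[of i] show ?case
      by (auto simp: \<alpha>_def \<mu>R_def pair_plan_mean_if_pair_weight_pos
          sum_pair_weight_times_pair_plan sum_deviation_eq_0)
  qed
  ultimately show ?thesis
    by blast
qed

end
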